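(* Let $d\ge2$ and $n\ge2$, and consider the vector program $$\max\ \frac12\left(\frac{d-1}{d}\right)-\frac14\sum_{a=1}^{d^2-1}\frac{1}{\binom n2}\sum_{1\le u<v\le n}\langle x^a_u,x^a_v\rangle$$ over real vectors $x^a_u\in\mathbb R^{m}$ ($m$ arbitrary, $a\in[d^2-1]$, $u\in[n]$) subject to $\langle x^a_u,x^b_u\rangle=\frac2d\delta_{ab}$ for all $u$ and all $a,b$. Its optimal value equals $\frac{(d-1)(d+n)}{2d(n-1)}$.
   Context: This vector program is the level-two noncommutative sum-of-squares relaxation of Quantum Max-$d$-Cut on the unweighted complete graph $K_n$, written in terms of the Gram vectors $x^a_u$ of the generalized Gell-Mann observables $\Lambda^a_u$. *)

theory Defs
  imports Complex_Main
begin

text \<open>Vectors in R^m are represented as functions nat => real, of which only the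
  coordinates 0..m-1 matter. Indices a in [d^2-1] and u in [n] are 0-based.\<close>

definition inner_m :: "nat \<Rightarrow> (nat \<Rightarrow> real) \<Rightarrow> (nat \<Rightarrow> real) \<Rightarrow> real" where
  "inner_m m y z = (\<Sum>i<m. y i * z i)"

definition qmc_feasible :: "nat \<Rightarrow> nat \<Rightarrow> nat \<Rightarrow> (nat \<Rightarrow> nat \<Rightarrow> nat \<Rightarrow> real) \<Rightarrow> bool" where
  "qmc_feasible d n m x \<longleftrightarrow>
     (\<forall>u<n. \<forall>a<d^2-1. \<forall>b<d^2-1.
        inner_m m (x a u) (x b u) = (if a = b then 2 / real d else 0))"

definition qmc_objective :: "nat \<Rightarrow> nat \<Rightarrow> nat \<Rightarrow> (nat \<Rightarrow> nat \<Rightarrow> nat \<Rightarrow> real) \<Rightarrow> real" where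
  "qmc_objective d n m x =
     1/2 * ((real d - 1) / real d)
     - 1/4 * (\<Sum>a<d^2-1. (1 / real (n choose 2)) *
                 (\<Sum>u<n. \<Sum>v\<in>{u<..<n}. inner_m m (x a u) (x a v)))"

end

theory Submission
  imports Defs
begin

text \<open>For a feasible family the constraint fixes \<open>|x\<^sup>a\<^sub>u|\<^sup>2 = 2/d\<close>, so expanding
  \<open>|\<Sum>\<^sub>u x\<^sup>a\<^sub>u|\<^sup>2 \<ge> 0\<close> turns the pair sum \<open>\<Sum>\<^bsub>u<v\<^esub> \<langle>x\<^sup>a\<^sub>u, x\<^sup>a\<^sub>v\<rangle>\<close> into \<open>(|\<Sum>\<^sub>u x\<^sup>a\<^sub>u|\<^sup>2 - 2n/d)/2\<close>.
  Hence on the feasible set the objective equals the claimed value minus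
  \<open>\<Sum>\<^sub>a |\<Sum>\<^sub>u x\<^sup>a\<^sub>u|\<^sup>2 / (4n(n-1))\<close>. Equality holds when every \<open>\<Sum>\<^sub>u x\<^sup>a\<^sub>u\<close> vanishes, e.g. for the
  scaled vertices \<open>e\<^sub>u - (1,\<dots>,1)/n\<close> of a centred simplex, placed in a separate block of \<open>n\<close>
  coordinates for each \<open>a\<close>.\<close>

lemma sum_lessThan_mult_div_mod:
  fixes h :: "nat \<Rightarrow> nat \<Rightarrow> 'a::comm_monoid_add"
  shows "(\<Sum>i<K * n. h (i div n) (i mod n)) = (\<Sum>a<K. \<Sum>w<n. h a w)"
proof (induction K)
  case 0
  then show ?case by simp
next
  case (Suc K)
  have split: "{..<Suc K * n} = {..<K * n} \<union> {K * n..<K * n + n}" by auto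
  have "(\<Sum>i<Suc K * n. h (i div n) (i mod n))
      = (\<Sum>i<K * n. h (i div n) (i mod n)) + (\<Sum>i\<in>{K * n..<K * n + n}. h (i div n) (i mod n))"
    unfolding split by (rule sum.union_disjoint) auto
  also have "(\<Sum>i\<in>{K * n..<K * n + n}. h (i div n) (i mod n)) = (\<Sum>w<n. h K w)"
    using sum.shift_bounds_nat_ivl[of "\<lambda>i. h (i div n) (i mod n)" 0 "K * n" n]
    by (simp add: add.commute lessThan_atLeast0)
  finally show ?case using Suc.IH by simp
qed

lemma sum_upper_pairs_sym:
  fixes f :: "nat \<Rightarrow> nat \<Rightarrow> 'a::comm_semiring_1"
  assumes sym: "\<And>u v. f u v = f v u"
  shows "(\<Sum>u<n. \<Sum>v<n. f u v) = (\<Sum>u<n. f u u) + 2 * (\<Sum>u<n. \<Sum>v\<in>{u<..<n}. f u v)"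
proof (induction n)
  case 0
  then show ?case by simp
next
  case (Suc n)
  have square: "(\<Sum>u<Suc n. \<Sum>v<Suc n. f u v)
      = (\<Sum>u<n. \<Sum>v<n. f u v) + 2 * (\<Sum>u<n. f u n) + f n n"
  proof -
    have "(\<Sum>v<n. f n v) = (\<Sum>u<n. f u n)"
      using sym by simp
    then show ?thesis
      by (simp add: sum.distrib mult_2 add_ac)
  qed
  have "{u<..<Suc n} = insert n {u<..<n}" if "u < n" for u
    using that by auto
  then have inner: "(\<Sum>u<n. \<Sum>v\<in>{u<..<Suc n}. f u v) = (\<Sum>u<n. (\<Sum>v\<in>{u<..<n}. f u v) + f u n)"
    by (intro sum.cong) (auto simp: add.commute)
  have "{n<..<Suc n} = {}"
    by auto
  then have pairs: "(\<Sum>u<Suc n. \<Sum>v\<in>{u<..<Suc n}. f u v)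
      = (\<Sum>u<n. \<Sum>v\<in>{u<..<n}. f u v) + (\<Sum>u<n. f u n)"
    by (simp add: inner sum.distrib)
  show ?case
    unfolding square pairs Suc.IH by (simp add: distrib_left add_ac)
qed

lemma real_choose_two: "real (n choose 2) = real n * (real n - 1) / 2"
proof -
  have "even (n * (n - 1))"
    by auto
  then have "2 * (n choose 2) = n * (n - 1)"
    unfolding choose_two by simp
  then have "2 * real (n choose 2) = real n * real (n - 1)"
    by (metis of_nat_mult of_nat_numeral)
  then show ?thesis
    by (cases n) auto
qed

lemma inner_m_sym: "inner_m m y z = inner_m m z y"
  unfolding inner_m_def by (simp add: mult.commute)

lemma inner_m_self_nonneg: "0 \<le> inner_m m y y"
  unfolding inner_m_def by (simp add: sum_nonneg)

lemma inner_m_zero_left: "inner_m m (\<lambda>_. 0) z = 0"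
  unfolding inner_m_def by simp

lemma sum_sum_inner_m:
  "(\<Sum>u\<in>A. \<Sum>v\<in>B. inner_m m (y u) (z v))
     = inner_m m (\<lambda>i. \<Sum>u\<in>A. y u i) (\<lambda>i. \<Sum>v\<in>B. z v i)"
proof -
  have "(\<Sum>u\<in>A. \<Sum>v\<in>B. \<Sum>i<m. y u i * z v i) = (\<Sum>u\<in>A. \<Sum>i<m. \<Sum>v\<in>B. y u i * z v i)"
    by (rule sum.cong[OF refl], rule sum.swap)
  also have "\<dots> = (\<Sum>i<m. \<Sum>u\<in>A. \<Sum>v\<in>B. y u i * z v i)"
    by (rule sum.swap)
  finally show ?thesis
    unfolding inner_m_def by (simp add: sum_product)
qed

lemma sum_upper_pairs_inner_m:
  fixes y :: "nat \<Rightarrow> nat \<Rightarrow> real"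
  shows "2 * (\<Sum>u<n. \<Sum>v\<in>{u<..<n}. inner_m m (y u) (y v))
     = inner_m m (\<lambda>i. \<Sum>u<n. y u i) (\<lambda>i. \<Sum>u<n. y u i) - (\<Sum>u<n. inner_m m (y u) (y u))"
  using sum_upper_pairs_sym[of "\<lambda>u v. inner_m m (y u) (y v)" n]
  by (simp add: inner_m_sym sum_sum_inner_m)

lemma qmc_objective_feasible_eq:
  assumes feas: "qmc_feasible d n m x" and "d \<ge> 1" and "n \<ge> 2"
  shows "qmc_objective d n m x
    = (real d - 1) * (real d + real n) / (2 * real d * (real n - 1))
      - (\<Sum>a<d^2-1. inner_m m (\<lambda>i. \<Sum>u<n. x a u i) (\<lambda>i. \<Sum>u<n. x a u i))
        / (4 * real n * (real n - 1))"
proof -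
  define S where "S a = inner_m m (\<lambda>i. \<Sum>u<n. x a u i) (\<lambda>i. \<Sum>u<n. x a u i)" for a
  have pairs: "(\<Sum>u<n. \<Sum>v\<in>{u<..<n}. inner_m m (x a u) (x a v)) = (S a - 2 * real n / real d) / 2"
    if "a < d^2-1" for a
  proof -
    have "(\<Sum>u<n. inner_m m (x a u) (x a u)) = real n * (2 / real d)"
      using feas that unfolding qmc_feasible_def by simp
    then show ?thesis
      using sum_upper_pairs_inner_m[where y="x a" and n=n and m=m] unfolding S_def
      by (simp add: algebra_simps)
  qed
  have d: "real d > 0" and n: "real n - 1 > 0"
    using assms by auto
  have K: "real (d^2 - 1) = (real d - 1) * (real d + 1)"
    using assms by (simp add: of_nat_diff algebra_simps power2_eq_square)
  have "qmc_objective d n m x = 1/2 * ((real d - 1) / real d)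
      - (\<Sum>a<d^2-1. S a - 2 * real n / real d) / (4 * real n * (real n - 1))"
    unfolding qmc_objective_def real_choose_two
    using d n by (simp add: pairs sum_distrib_left sum_divide_distrib) (intro sum.cong; simp add: field_simps)
  also have "\<dots> = (real d - 1) * (real d + real n) / (2 * real d * (real n - 1))
      - (\<Sum>a<d^2-1. S a) / (4 * real n * (real n - 1))"
  proof -
    have "1/2 * ((real d - 1) / real d) - (T - real (d^2 - 1) * (2 * real n / real d)) / (4 * real n * (real n - 1))
        = (real d - 1) * (real d + real n) / (2 * real d * (real n - 1)) - T / (4 * real n * (real n - 1))"
      for T
      using d n unfolding K by (simp add: divide_simps) algebra
    then show ?thesis
      by (simp add: sum_subtractf)
  qed
  finally show ?thesis
    unfolding S_def .
qed

lemma sum_centred_indicator_square: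
  assumes "u < n"
  shows "(\<Sum>w<n. ((if w = u then 1 else 0) - 1 / real n)\<^sup>2) = 1 - 1 / real n"
proof -
  have "real n \<noteq> 0"
    using assms by simp
  then have "((if w = u then 1 else 0) - 1 / real n)\<^sup>2
      = (if w = u then 1 - 2 / real n else 0) + 1 / (real n)\<^sup>2" for w
    by (simp add: power2_eq_square field_simps)
  then show ?thesis
    using assms by (simp add: sum.distrib power2_eq_square)
qed

lemma sum_centred_indicator:
  assumes "w < n"
  shows "(\<Sum>u<n. (if w = u then 1 else 0) - 1 / real n) = 0"
  using assms by (simp add: sum_subtractf)

text \<open>Coordinate \<open>i\<close> is read as the pair \<open>(i div n, i mod n)\<close>: block \<open>a\<close> carries
  \<open>c (e\<^sub>u - (1,\<dots>,1)/n)\<close>, with \<open>c\<close> chosen so that its squared length \<open>c\<^sup>2 (1 - 1/n)\<close> is \<open>2/d\<close>.\<close>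

definition qmc_optimum :: "nat \<Rightarrow> nat \<Rightarrow> nat \<Rightarrow> nat \<Rightarrow> nat \<Rightarrow> real" where
  "qmc_optimum d n a u i =
     (if i div n = a
      then sqrt (2 * real n / (real d * (real n - 1)))
             * ((if i mod n = u then 1 else 0) - 1 / real n)
      else 0)"

lemma qmc_optimum_inner:
  assumes "a < K" and "u < n" and "n \<ge> 2" and "d \<ge> 1"
  shows "inner_m (K * n) (qmc_optimum d n a u) (qmc_optimum d n b u)
           = (if a = b then 2 / real d else 0)"
proof -
  define c where "c = sqrt (2 * real n / (real d * (real n - 1)))"
  define t where "t w = (if w = u then 1 else 0) - 1 / real n" for w
  have "inner_m (K * n) (qmc_optimum d n a u) (qmc_optimum d n b u)
      = (\<Sum>p<K. \<Sum>w<n. (if p = a then c * t w else 0) * (if p = b then c * t w else 0))"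
    unfolding inner_m_def qmc_optimum_def c_def[symmetric] t_def by (rule sum_lessThan_mult_div_mod)
  also have "\<dots> = (\<Sum>p<K. \<Sum>w<n. if p = a \<and> a = b then c\<^sup>2 * (t w)\<^sup>2 else 0)"
    by (intro sum.cong refl) (simp add: power2_eq_square)
  also have "\<dots> = (\<Sum>p<K. if p = a \<and> a = b then c\<^sup>2 * (\<Sum>w<n. (t w)\<^sup>2) else 0)"
    by (intro sum.cong refl) (auto simp: sum_distrib_left)
  also have "\<dots> = (if a = b then c\<^sup>2 * (1 - 1 / real n) else 0)"
    using assms by (simp add: t_def sum_centred_indicator_square)
  also have "\<dots> = (if a = b then 2 / real d else 0)"
    using assms by (simp add: c_def field_simps)
  finally show ?thesis .
qed

lemma qmc_optimum_feasible:
  assumes "n \<ge> 2" and "d \<ge> 1"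
  shows "qmc_feasible d n ((d^2-1) * n) (qmc_optimum d n)"
  unfolding qmc_feasible_def using assms by (intro allI impI qmc_optimum_inner)

lemma qmc_optimum_balanced:
  assumes "n \<ge> 1"
  shows "(\<lambda>i. \<Sum>u<n. qmc_optimum d n a u i) = (\<lambda>_. 0)"
proof
  fix i
  have "i mod n < n"
    using assms by simp
  then show "(\<Sum>u<n. qmc_optimum d n a u i) = 0"
    by (cases "i div n = a")
      (simp_all add: qmc_optimum_def sum_distrib_left[symmetric] sum_centred_indicator)
qed

theorem mainTheorem15:
  fixes d n :: nat
  assumes "d \<ge> 2" and "n \<ge> 2"
  shows "(\<exists>m x. qmc_feasible d n m x \<and>
            qmc_objective d n m x = (real d - 1) * (real d + real n) / (2 * real d * (real n - 1)))
       \<and> (\<forall>m x. qmc_feasible d n m x \<longrightarrow>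
            qmc_objective d n m x \<le> (real d - 1) * (real d + real n) / (2 * real d * (real n - 1)))"
proof (intro conjI allI impI)
  have feas: "qmc_feasible d n ((d^2-1) * n) (qmc_optimum d n)"
    using assms by (intro qmc_optimum_feasible) auto
  then show "\<exists>m x. qmc_feasible d n m x \<and>
      qmc_objective d n m x = (real d - 1) * (real d + real n) / (2 * real d * (real n - 1))"
    using assms qmc_objective_feasible_eq[OF feas]
    by (auto simp: qmc_optimum_balanced inner_m_zero_left)
next
  fix m x
  assume feas: "qmc_feasible d n m x"
  have "0 \<le> (\<Sum>a<d^2-1. inner_m m (\<lambda>i. \<Sum>u<n. x a u i) (\<lambda>i. \<Sum>u<n. x a u i))
              / (4 * real n * (real n - 1))"
    using assms by (intro divide_nonneg_pos sum_nonneg inner_m_self_nonneg) auto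
  then show "qmc_objective d n m x \<le> (real d - 1) * (real d + real n) / (2 * real d * (real n - 1))"
    using assms qmc_objective_feasible_eq[OF feas] by simp
qed

end
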